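(* Let $f:\mathbb{R}\times[0,1]\to\mathbb{R}$ be measurable, let $\mu_0\in\mathbb{R}$ be fixed, let $(\xi_t)_{t\ge 0}$ be independent random variables each uniformly distributed on $[0,1]$, and define $\mu_{t+1}=\mu_t+f(\mu_t,\xi_t)$ for $t\ge 0$. Let $F(\mu,x)=\mathbb{P}_{\xi\sim U([0,1])}(f(\mu,\xi)\le x)$. Assume that $F$ is continuous at $(\mu,0)$ for every $\mu\in\mathbb{R}$, and that there exists $\mu_\circ\in\mathbb{R}$ such that (1) $F(\mu,0)<1$ for all $\mu\ge\mu_\circ$, and (2) $F(\mu,0)>0$ for all $\mu\le\mu_\circ$. Then $\limsup_{t\to\infty}|\mu_t|=\infty$ almost surely.
   Context: $U([0,1])$ denotes the uniform distribution on $[0,1]$. The sequence $(\mu_t)$ models a user's interest in a fixed item over time; the conclusion is called weak degeneracy. *)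

theory Defs
  imports "HOL-Probability.Probability"
begin

primrec interest_seq ::
  "(real \<Rightarrow> real \<Rightarrow> real) \<Rightarrow> real \<Rightarrow> (nat \<Rightarrow> 'a \<Rightarrow> real) \<Rightarrow> nat \<Rightarrow> 'a \<Rightarrow> real" where
  "interest_seq f m0 \<xi> 0 \<omega> = m0"
| "interest_seq f m0 \<xi> (Suc t) \<omega> =
     interest_seq f m0 \<xi> t \<omega> + f (interest_seq f m0 \<xi> t \<omega>) (\<xi> t \<omega>)"

definition incr_cdf :: "(real \<Rightarrow> real \<Rightarrow> real) \<Rightarrow> real \<Rightarrow> real \<Rightarrow> real" where
  "incr_cdf f m x = measure (uniform_measure lborel {0..1::real}) {y \<in> {0..1}. f m y \<le> x}"

end

theory Submission
  imports Defs
begin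

(* Fix K. Continuity of F at (mu, 0) and the sign conditions at mu_o give, by compactness of
   [-K, K], a drift delta > 0 and a probability e > 0 such that from any state mu in [-K, K]
   the next increment exceeds delta with probability at least e if mu >= mu_o, and is at most
   -delta with probability at least e if mu < mu_o. Along N > 2K/delta consecutive such steps
   the process moves monotonically away from mu_o and must leave [-K, K]. By independence,
   whatever happened before, a block of N steps consists of such steps with probability at
   least e^N, so the process stays in [-K, K] for jN steps with probability at most
   (1 - e^N)^j. Hence almost surely it leaves every [-K, K]. *)

lemma compact_uniform_positivity:
  fixes g :: "'a::metric_space \<times> real \<Rightarrow> real" and S :: "'a set"
  assumes "compact S"
    and cont: "\<And>m. m \<in> S \<Longrightarrow> isCont g (m, 0)"
    and pos: "\<And>m. m \<in> S \<Longrightarrow> 0 < g (m, 0)"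
  shows "\<exists>e>0. \<forall>m\<in>S. \<forall>x. \<bar>x\<bar> < e \<longrightarrow> e < g (m, x)"
proof (rule ccontr)
  assume "\<not> ?thesis"
  then have "\<exists>m x. m \<in> S \<and> \<bar>x\<bar> < 1 / Suc n \<and> g (m, x) \<le> 1 / Suc n" for n
    by (meson not_less of_nat_0_less_iff zero_less_Suc zero_less_divide_1_iff)
  then obtain m x where m: "\<And>n. m n \<in> S" and x: "\<And>n. \<bar>x n\<bar> < 1 / Suc n"
    and g: "\<And>n. g (m n, x n) \<le> 1 / Suc n"
    by metis
  obtain l r where "l \<in> S" "strict_mono r" and lim: "(m \<circ> r) \<longlonglongrightarrow> l"
    using compact_imp_seq_compact[OF \<open>compact S\<close>] m unfolding seq_compact_def by metis
  have inv: "(\<lambda>n. 1 / real (Suc (r n))) \<longlonglongrightarrow> 0"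
    using LIMSEQ_subseq_LIMSEQ[OF LIMSEQ_Suc[OF lim_inverse_n'] \<open>strict_mono r\<close>]
    by (simp add: o_def)
  have "(\<lambda>n. x (r n)) \<longlonglongrightarrow> 0"
    using x by (intro Lim_null_comparison[OF _ inv] always_eventually) (simp add: less_imp_le)
  with lim have "(\<lambda>n. g (m (r n), x (r n))) \<longlonglongrightarrow> g (l, 0)"
    by (intro isCont_tendsto_compose[OF cont[OF \<open>l \<in> S\<close>]] tendsto_Pair) (auto simp: o_def)
  then have "g (l, 0) \<le> 0"
    using g by (intro LIMSEQ_le[OF _ inv]) auto
  with pos[OF \<open>l \<in> S\<close>] show False
    by simp
qed

lemma uniform_drift_margin:
  fixes F :: "real \<Rightarrow> real \<Rightarrow> real"
  assumes cont: "\<And>m. isCont (\<lambda>p. F (fst p) (snd p)) (m, 0)"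
    and up: "\<And>m. mc \<le> m \<Longrightarrow> F m 0 < 1" and down: "\<And>m. m \<le> mc \<Longrightarrow> 0 < F m 0"
  shows "\<exists>\<delta>>0. \<exists>e>0. e \<le> 1 \<and> (\<forall>m\<in>{mc..K}. e \<le> 1 - F m \<delta>) \<and> (\<forall>m\<in>{-K..mc}. e \<le> F m (-\<delta>))"
proof -
  have "isCont (\<lambda>p. 1 - F (fst p) (snd p)) (m, 0)" for m
    using cont[of m] by (intro continuous_intros)
  then obtain e1 where "e1 > 0" and e1: "\<And>m x. m \<in> {mc..K} \<Longrightarrow> \<bar>x\<bar> < e1 \<Longrightarrow> e1 < 1 - F m x"
    using compact_uniform_positivity[of "{mc..K}" "\<lambda>p. 1 - F (fst p) (snd p)"] up by auto
  obtain e2 where "e2 > 0" and e2: "\<And>m x. m \<in> {-K..mc} \<Longrightarrow> \<bar>x\<bar> < e2 \<Longrightarrow> e2 < F m x"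
    using compact_uniform_positivity[of "{-K..mc}" "\<lambda>p. F (fst p) (snd p)"] cont down by auto
  define e where "e = min (min e1 e2) 1"
  have "\<bar>e / 2\<bar> < e1" "\<bar>- (e / 2)\<bar> < e2" "e \<le> e1" "e \<le> e2"
    unfolding e_def using \<open>e1 > 0\<close> \<open>e2 > 0\<close> by auto
  have "0 < e" "e \<le> 1"
    unfolding e_def using \<open>e1 > 0\<close> \<open>e2 > 0\<close> by auto
  moreover have "e \<le> 1 - F m (e / 2)" if "m \<in> {mc..K}" for m
    using e1[OF that \<open>\<bar>e / 2\<bar> < e1\<close>] \<open>e \<le> e1\<close> by linarith
  moreover have "e \<le> F m (- (e / 2))" if "m \<in> {-K..mc}" for m
    using e2[OF that \<open>\<bar>- (e / 2)\<bar> < e2\<close>] \<open>e \<le> e2\<close> by linarith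
  ultimately show ?thesis
    by (intro exI[of _ "e / 2"] exI[of _ e]) auto
qed

lemma linear_drift:
  fixes s :: "nat \<Rightarrow> real"
  assumes up_closed: "\<And>x y. P x \<Longrightarrow> x \<le> y \<Longrightarrow> P y" and start: "P (s a)" and "0 \<le> \<delta>"
    and step: "\<And>r. a \<le> r \<Longrightarrow> r < a + n \<Longrightarrow> P (s r) \<Longrightarrow> s r + \<delta> \<le> s (Suc r)"
  shows "s a + real n * \<delta> \<le> s (a + n)"
  using step
proof (induction n)
  case (Suc n)
  then have IH: "s a + real n * \<delta> \<le> s (a + n)"
    by (metis add_Suc_right less_Suc_eq)
  with \<open>0 \<le> \<delta>\<close> have "s a \<le> s (a + n)"
    by (smt (verit) mult_nonneg_nonneg of_nat_0_le_iff)
  then have "P (s (a + n))"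
    using up_closed start by blast
  then have "s (a + n) + \<delta> \<le> s (Suc (a + n))"
    using Suc.prems by simp
  with IH show ?case
    by (simp add: algebra_simps)
qed simp

lemma no_bounded_drifting_run:
  fixes s y :: "nat \<Rightarrow> real" and g :: "real \<Rightarrow> real \<Rightarrow> real"
  assumes step: "\<And>r. s (Suc r) = s r + g (s r) (y r)"
    and drift: "\<And>r. a \<le> r \<Longrightarrow> r < a + N \<Longrightarrow>
       K < \<bar>s r\<bar> \<or> (mc \<le> s r \<and> \<delta> < g (s r) (y r)) \<or> (s r < mc \<and> g (s r) (y r) \<le> -\<delta>)"
    and bounded: "\<And>r. r \<le> a + N \<Longrightarrow> \<bar>s r\<bar> \<le> K"
    and "\<bar>mc\<bar> \<le> K" and "2 * K < real N * \<delta>" and "0 < \<delta>"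
  shows False
proof (cases "mc \<le> s a")
  case True
  have "s a + real N * \<delta> \<le> s (a + N)"
  proof (rule linear_drift[where P = "\<lambda>x. mc \<le> x"])
    fix r assume "a \<le> r" "r < a + N" "mc \<le> s r"
    with drift[of r] bounded[of r] step[of r] show "s r + \<delta> \<le> s (Suc r)"
      by auto
  qed (use True \<open>0 < \<delta>\<close> in auto)
  with True bounded[of "a + N"] \<open>\<bar>mc\<bar> \<le> K\<close> \<open>2 * K < real N * \<delta>\<close> show False
    by linarith
next
  case False
  have "- s a + real N * \<delta> \<le> - s (a + N)"
  proof (rule linear_drift[where s = "\<lambda>r. - s r" and P = "\<lambda>x. - mc < x"])
    fix r assume "a \<le> r" "r < a + N" "- mc < - s r"
    with drift[of r] bounded[of r] step[of r] show "- s r + \<delta> \<le> - s (Suc r)"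
      by auto
  qed (use False \<open>0 < \<delta>\<close> in auto)
  with False bounded[of "a + N"] \<open>\<bar>mc\<bar> \<le> K\<close> \<open>2 * K < real N * \<delta>\<close> show False
    by linarith
qed

lemma limsup_abs_eq_infinity:
  fixes s :: "nat \<Rightarrow> real"
  assumes unbounded: "\<And>k::nat. \<exists>r. real k < \<bar>s r\<bar>"
  shows "limsup (\<lambda>t. ereal \<bar>s t\<bar>) = \<infinity>"
proof -
  have "(SUP t\<in>{n..}. ereal \<bar>s t\<bar>) = \<infinity>" for n
  proof -
    have "\<exists>t\<in>{n..}. c < ereal \<bar>s t\<bar>" if "c < \<infinity>" for c
    proof -
      obtain k :: nat where k: "max (\<Sum>t<n. \<bar>s t\<bar>) (real_of_ereal c) < k"
        using reals_Archimedean2 by blast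
      obtain r where r: "real k < \<bar>s r\<bar>"
        using unbounded by blast
      have "n \<le> r"
      proof (rule ccontr)
        assume "\<not> n \<le> r"
        then have "\<bar>s r\<bar> \<le> (\<Sum>t<n. \<bar>s t\<bar>)"
          by (intro member_le_sum) auto
        with k r show False
          by linarith
      qed
      moreover have "c < ereal \<bar>s r\<bar>"
        using that k r by (cases c) auto
      ultimately show ?thesis
        by auto
    qed
    then show ?thesis
      unfolding top_ereal_def[symmetric] by (subst SUP_eq_top_iff) (auto simp: top_ereal_def)
  qed
  then show ?thesis
    by (simp add: limsup_INF_SUP)
qed

lemma borel_measurable_clamp_snd:
  fixes f :: "real \<Rightarrow> real \<Rightarrow> real"
  assumes "(\<lambda>p. f (fst p) (snd p)) \<in> borel_measurable (restrict_space borel (UNIV \<times> {0..1}))"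
  shows "(\<lambda>p. f (fst p) (max 0 (min 1 (snd p)))) \<in> borel_measurable borel"
proof -
  have "(\<lambda>p::real \<times> real. (fst p, max 0 (min 1 (snd p)))) \<in> measurable (borel \<Otimes>\<^sub>M borel) (borel \<Otimes>\<^sub>M borel)"
    by measurable
  then have "(\<lambda>p::real \<times> real. (fst p, max 0 (min 1 (snd p))))
      \<in> measurable borel (restrict_space borel (UNIV \<times> {0..1}))"
    by (intro measurable_restrict_space2) (auto simp: borel_prod)
  from measurable_comp[OF this assms] show ?thesis
    by (simp add: o_def)
qed

lemma uniform_measure_clamped_cdf:
  fixes f :: "real \<Rightarrow> real \<Rightarrow> real"
  assumes f_meas: "(\<lambda>p. f (fst p) (max 0 (min 1 (snd p)))) \<in> borel_measurable borel"
  defines "U \<equiv> uniform_measure lborel {0..1::real}"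
  shows "emeasure U {y. f m (max 0 (min 1 y)) \<le> x} = ennreal (incr_cdf f m x)"
    and "emeasure U {y. x < f m (max 0 (min 1 y))} = ennreal (1 - incr_cdf f m x)"
proof -
  interpret U: prob_space U
    unfolding U_def by (intro prob_space_uniform_measure) auto
  let ?L = "{y. f m (max 0 (min 1 y)) \<le> x}"
  have "(\<lambda>y. (m, y)) \<in> measurable borel (borel :: (real \<times> real) measure)"
    using measurable_Pair[OF measurable_const measurable_ident_sets[OF refl]]
    by (simp add: borel_prod)
  from measurable_comp[OF this f_meas] have "(\<lambda>y. f m (max 0 (min 1 y))) \<in> borel_measurable borel"
    by (simp add: o_def)
  then have L: "?L \<in> sets borel"
    using measurable_sets[of _ borel borel "{..x}"] by (simp add: vimage_def)
  have "{y \<in> {0..1}. f m y \<le> x} = {0..1} \<inter> ?L"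
    by auto
  then have "measure U ?L = incr_cdf f m x"
    using L unfolding incr_cdf_def U_def by (simp add: measure_uniform_measure Int_absorb1)
  then show "emeasure U ?L = ennreal (incr_cdf f m x)"
    by (simp add: U.emeasure_eq_measure)
  have "{y. x < f m (max 0 (min 1 y))} = space U - ?L"
    unfolding U_def by auto
  moreover have "measure U (space U - ?L) = 1 - measure U ?L"
    using L by (intro U.prob_compl) (simp add: U_def)
  ultimately show "emeasure U {y. x < f m (max 0 (min 1 y))} = ennreal (1 - incr_cdf f m x)"
    using \<open>measure U ?L = incr_cdf f m x\<close> by (simp add: U.emeasure_eq_measure)
qed

lemma interest_seq_clamp:
  assumes "\<And>t. \<xi> t \<omega> \<in> {0..1}"
  shows "interest_seq (\<lambda>m y. f m (max 0 (min 1 y))) m0 \<xi> t \<omega> = interest_seq f m0 \<xi> t \<omega>"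
proof (induction t)
  case (Suc t)
  have "max 0 (min 1 (\<xi> t \<omega>)) = \<xi> t \<omega>"
    using assms[of t] by auto
  with Suc show ?case
    by simp
qed simp

lemma interest_seq_measurable:
  fixes g :: "real \<Rightarrow> real \<Rightarrow> real"
  assumes g: "(\<lambda>p. g (fst p) (snd p)) \<in> borel_measurable borel"
    and \<xi>: "\<And>r. r < t \<Longrightarrow> \<xi> r \<in> borel_measurable M"
  shows "interest_seq g m0 \<xi> t \<in> borel_measurable M"
  using \<xi>
proof (induction t)
  case 0
  have "interest_seq g m0 \<xi> 0 = (\<lambda>_. m0)"
    by (rule ext) simp
  then show ?case
    by simp
next
  case (Suc t)
  have \<mu>: "interest_seq g m0 \<xi> t \<in> borel_measurable M"
    by (rule Suc.IH) (simp add: Suc.prems)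
  have "(\<lambda>\<omega>. (interest_seq g m0 \<xi> t \<omega>, \<xi> t \<omega>)) \<in> measurable M (borel \<Otimes>\<^sub>M borel)"
    using \<mu> Suc.prems[of t] by (intro measurable_Pair) auto
  then have "(\<lambda>\<omega>. (interest_seq g m0 \<xi> t \<omega>, \<xi> t \<omega>)) \<in> measurable M borel"
    by (simp only: borel_prod)
  from measurable_comp[OF this g]
  have "(\<lambda>\<omega>. g (interest_seq g m0 \<xi> t \<omega>) (\<xi> t \<omega>)) \<in> borel_measurable M"
    by (simp add: o_def)
  from borel_measurable_add[OF \<mu> this] show ?case
    by (simp add: fun_eq_iff)
qed

lemma interest_seq_restrict:
  assumes "{..<t} \<subseteq> I"
  shows "interest_seq g m0 \<xi> t \<omega> = interest_seq g m0 (\<lambda>r v. v r) t (\<lambda>i\<in>I. \<xi> i \<omega>)"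
  using assms
proof (induction t)
  case (Suc t)
  then have "{..<t} \<subseteq> I" "t \<in> I"
    by auto
  with Suc.IH show ?case
    by simp
qed simp

definition natural_filtration :: "'a measure \<Rightarrow> (nat \<Rightarrow> 'a \<Rightarrow> real) \<Rightarrow> nat \<Rightarrow> 'a measure" where
  "natural_filtration M \<xi> t =
     vimage_algebra (space M) (\<lambda>\<omega>. \<lambda>i\<in>{..<t}. \<xi> i \<omega>) (PiM {..<t} (\<lambda>_. borel))"

lemma space_natural_filtration [simp]: "space (natural_filtration M \<xi> t) = space M"
  by (simp add: natural_filtration_def)

lemma sets_natural_filtration:
  "sets (natural_filtration M \<xi> t) =
     {(\<lambda>\<omega>. \<lambda>i\<in>{..<t}. \<xi> i \<omega>) -` D \<inter> space M | D. D \<in> sets (PiM {..<t} (\<lambda>_. borel))}"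
  unfolding natural_filtration_def by (rule sets_vimage_algebra2) (auto simp: space_PiM)

lemma measurable_natural_filtration:
  assumes "r < t"
  shows "\<xi> r \<in> borel_measurable (natural_filtration M \<xi> t)"
proof -
  have "(\<lambda>\<omega>. \<lambda>i\<in>{..<t}. \<xi> i \<omega>) \<in> measurable (natural_filtration M \<xi> t) (PiM {..<t} (\<lambda>_. borel))"
    unfolding natural_filtration_def by (rule measurable_vimage_algebra1) (auto simp: space_PiM)
  from measurable_comp[OF this measurable_component_singleton[of r]] assms show ?thesis
    by (simp add: o_def)
qed

lemma sets_natural_filtration_mono:
  assumes "t \<le> s"
  shows "sets (natural_filtration M \<xi> t) \<subseteq> sets (natural_filtration M \<xi> s)"
proof -
  have "(\<lambda>\<omega>. \<lambda>i\<in>{..<t}. \<xi> i \<omega>) \<in> measurable (natural_filtration M \<xi> s) (PiM {..<t} (\<lambda>_. borel))"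
    using assms by (intro measurable_restrict measurable_natural_filtration) auto
  then show ?thesis
    unfolding measurable_iff_sets natural_filtration_def[of M \<xi> t] by simp
qed

lemma sets_natural_filtration_subset:
  assumes "\<And>i. \<xi> i \<in> borel_measurable M"
  shows "sets (natural_filtration M \<xi> t) \<subseteq> sets M"
proof -
  have "(\<lambda>\<omega>. \<lambda>i\<in>{..<t}. \<xi> i \<omega>) \<in> measurable M (PiM {..<t} (\<lambda>_. borel))"
    using assms by (intro measurable_restrict) auto
  then show ?thesis
    unfolding measurable_iff_sets natural_filtration_def by simp
qed

lemma interest_seq_measurable_natural_filtration:
  fixes g :: "real \<Rightarrow> real \<Rightarrow> real"
  assumes "(\<lambda>p. g (fst p) (snd p)) \<in> borel_measurable borel" and "r \<le> t"
  shows "interest_seq g m0 \<xi> r \<in> borel_measurable (natural_filtration M \<xi> t)"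
  using assms by (intro interest_seq_measurable measurable_natural_filtration) auto

lemma interest_seq_step_event_natural_filtration:
  fixes g :: "real \<Rightarrow> real \<Rightarrow> real" and C :: "(real \<times> real) set"
  assumes g: "(\<lambda>p. g (fst p) (snd p)) \<in> borel_measurable borel" and C: "C \<in> sets borel"
    and "r < t"
  shows "{\<omega>\<in>space M. (interest_seq g m0 \<xi> r \<omega>, \<xi> r \<omega>) \<in> C} \<in> sets (natural_filtration M \<xi> t)"
proof -
  have "(\<lambda>\<omega>. (interest_seq g m0 \<xi> r \<omega>, \<xi> r \<omega>)) \<in> measurable (natural_filtration M \<xi> t) (borel \<Otimes>\<^sub>M borel)"
    using interest_seq_measurable_natural_filtration[OF g less_imp_le[OF \<open>r < t\<close>]]
      measurable_natural_filtration[OF \<open>r < t\<close>]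
    by (rule measurable_Pair)
  moreover have "C \<in> sets (borel \<Otimes>\<^sub>M borel)"
    using C by (simp only: borel_prod)
  ultimately show ?thesis
    by (auto dest: measurable_sets simp: vimage_def Int_def conj_commute)
qed

lemma interest_seq_bounded_natural_filtration:
  fixes g :: "real \<Rightarrow> real \<Rightarrow> real"
  assumes g: "(\<lambda>p. g (fst p) (snd p)) \<in> borel_measurable borel"
  shows "{\<omega>\<in>space M. \<forall>r\<le>n. \<bar>interest_seq g m0 \<xi> r \<omega>\<bar> \<le> K} \<in> sets (natural_filtration M \<xi> n)"
proof -
  have "{\<omega>\<in>space (natural_filtration M \<xi> n). \<bar>interest_seq g m0 \<xi> r \<omega>\<bar> \<le> K}
      \<in> sets (natural_filtration M \<xi> n)" if "r \<le> n" for r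
    using borel_measurable_abs[OF interest_seq_measurable_natural_filtration[OF g that]]
      borel_measurable_const
    by (rule borel_measurable_le)
  then have "{\<omega>\<in>space (natural_filtration M \<xi> n). \<forall>r\<in>{..n}. \<bar>interest_seq g m0 \<xi> r \<omega>\<bar> \<le> K}
      \<in> sets (natural_filtration M \<xi> n)"
    by (intro sets.sets_Collect_finite_All) auto
  then show ?thesis
    by (simp only: space_natural_filtration Ball_def atMost_iff)
qed

lemma (in prob_space) emeasure_indep_var_Pair:
  assumes indep: "indep_var S X T Y" and E: "E \<in> sets (S \<Otimes>\<^sub>M T)"
  shows "emeasure M {\<omega>\<in>space M. (X \<omega>, Y \<omega>) \<in> E}
    = (\<integral>\<^sup>+ x. emeasure (distr M T Y) (Pair x -` E) \<partial>distr M S X)"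
proof -
  have X: "random_variable S X" and Y: "random_variable T Y"
    and law: "distr M S X \<Otimes>\<^sub>M distr M T Y = distr M (S \<Otimes>\<^sub>M T) (\<lambda>\<omega>. (X \<omega>, Y \<omega>))"
    using indep unfolding indep_var_distribution_eq by auto
  have "emeasure M {\<omega>\<in>space M. (X \<omega>, Y \<omega>) \<in> E} = emeasure (distr M (S \<Otimes>\<^sub>M T) (\<lambda>\<omega>. (X \<omega>, Y \<omega>))) E"
    using X Y E by (subst emeasure_distr) (auto intro!: arg_cong[where f="emeasure M"])
  also have "\<dots> = emeasure (distr M S X \<Otimes>\<^sub>M distr M T Y) E"
    by (simp add: law)
  also have "\<dots> = (\<integral>\<^sup>+ x. emeasure (distr M T Y) (Pair x -` E) \<partial>distr M S X)"
  proof (rule sigma_finite_measure.emeasure_pair_measure_alt)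
    show "sigma_finite_measure (distr M T Y)"
      using Y by (intro prob_space_imp_sigma_finite prob_space_distr)
    show "E \<in> sets (distr M S X \<Otimes>\<^sub>M distr M T Y)"
      using E by (simp cong: sets_pair_measure_cong)
  qed
  finally show ?thesis .
qed

lemma (in prob_space) emeasure_indep_var_section_ge:
  assumes indep: "indep_var S X T Y" and E: "E \<in> sets (S \<Otimes>\<^sub>M T)" and D: "D \<in> sets S"
    and sections: "\<And>x. x \<in> D \<Longrightarrow> c \<le> emeasure (distr M T Y) (Pair x -` E)"
  shows "c * emeasure M (X -` D \<inter> space M) \<le> emeasure M {\<omega>\<in>space M. X \<omega> \<in> D \<and> (X \<omega>, Y \<omega>) \<in> E}"
proof -
  have X: "random_variable S X" and Y: "random_variable T Y"
    using indep unfolding indep_var_distribution_eq by auto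
  have E_space: "E \<subseteq> space S \<times> space T"
    using sets.sets_into_space[OF E] by (simp add: space_pair_measure)
  have "c * emeasure M (X -` D \<inter> space M) = (\<integral>\<^sup>+ x. c * indicator D x \<partial>distr M S X)"
    using X D by (simp add: nn_integral_cmult_indicator emeasure_distr)
  also have "\<dots> \<le> (\<integral>\<^sup>+ x. emeasure (distr M T Y) (Pair x -` (E \<inter> D \<times> space T)) \<partial>distr M S X)"
  proof (rule nn_integral_mono)
    fix x
    have "Pair x -` (E \<inter> D \<times> space T) = (if x \<in> D then Pair x -` E else {})"
      using E_space by auto
    then show "c * indicator D x \<le> emeasure (distr M T Y) (Pair x -` (E \<inter> D \<times> space T))"
      using sections[of x] by (simp split: split_indicator)
  qed
  also have "\<dots> = emeasure M {\<omega>\<in>space M. (X \<omega>, Y \<omega>) \<in> E \<inter> D \<times> space T}"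
    using E D by (intro emeasure_indep_var_Pair[OF indep, symmetric]) auto
  also have "{\<omega>\<in>space M. (X \<omega>, Y \<omega>) \<in> E \<inter> D \<times> space T} = {\<omega>\<in>space M. X \<omega> \<in> D \<and> (X \<omega>, Y \<omega>) \<in> E}"
    using measurable_space[OF Y] by auto
  finally show ?thesis .
qed

locale uniform_iid_sequence = prob_space +
  fixes \<xi> :: "nat \<Rightarrow> 'a \<Rightarrow> real"
  assumes xi_rv: "\<And>t. \<xi> t \<in> borel_measurable M"
    and xi_indep: "indep_vars (\<lambda>_. borel) \<xi> UNIV"
    and xi_unif: "\<And>t. distr M borel (\<xi> t) = uniform_measure lborel {0..1}"
begin

lemma AE_interest_seq_clamp:
  "AE \<omega> in M. \<forall>t. interest_seq (\<lambda>m y. f m (max 0 (min 1 y))) m0 \<xi> t \<omega> = interest_seq f m0 \<xi> t \<omega>"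
proof -
  have "AE \<omega> in M. \<xi> t \<omega> \<in> {0..1}" for t
  proof -
    have "AE y in distr M borel (\<xi> t). y \<in> {0..1}"
      unfolding xi_unif by (rule AE_uniform_measureI) auto
    then show ?thesis
      using xi_rv[of t] by (simp add: AE_distr_iff)
  qed
  then have "AE \<omega> in M. \<forall>t. \<xi> t \<omega> \<in> {0..1}"
    by (simp add: AE_all_countable)
  then show ?thesis
    by eventually_elim (auto intro: interest_seq_clamp)
qed

lemma interest_seq_step_prob:
  fixes g :: "real \<Rightarrow> real \<Rightarrow> real" and C :: "(real \<times> real) set"
  assumes g: "(\<lambda>p. g (fst p) (snd p)) \<in> borel_measurable borel"
    and C: "C \<in> sets borel"
    and Cp: "\<And>m. ennreal p \<le> emeasure (uniform_measure lborel {0..1}) {y. (m, y) \<in> C}"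
    and A: "A \<in> sets (natural_filtration M \<xi> t)"
  shows "ennreal p * emeasure M A
    \<le> emeasure M (A \<inter> {\<omega>\<in>space M. (interest_seq g m0 \<xi> t \<omega>, \<xi> t \<omega>) \<in> C})"
proof -
  let ?U = "uniform_measure lborel {0..1::real}"
  let ?S = "PiM {..<t} (\<lambda>_. borel) :: (nat \<Rightarrow> real) measure"
  let ?T = "PiM {t} (\<lambda>_. borel) :: (nat \<Rightarrow> real) measure"
  define V where "V = (\<lambda>\<omega>. \<lambda>i\<in>{..<t}. \<xi> i \<omega>)"
  \<comment> \<open>\<open>indep_var\<close> needs both variables in one type, so \<open>\<xi> t\<close> enters as the vector \<open>W\<close>.\<close>
  define W where "W = (\<lambda>\<omega>. \<lambda>i\<in>{t}. \<xi> i \<omega>)"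
  define \<Phi> where "\<Phi> = interest_seq g m0 (\<lambda>r v. v r) t"
  have V: "V \<in> measurable M ?S"
    unfolding V_def by (intro measurable_restrict xi_rv)
  have \<Phi>: "\<Phi> \<in> borel_measurable ?S"
    unfolding \<Phi>_def by (intro interest_seq_measurable g measurable_component_singleton) auto
  obtain D where D: "D \<in> sets ?S" and A_eq: "A = V -` D \<inter> space M"
    using A unfolding sets_natural_filtration V_def by blast
  have indep: "indep_var ?S V ?T W"
    unfolding V_def W_def by (rule indep_var_restrict[OF xi_indep]) auto
  have embed: "(\<lambda>y. \<lambda>i\<in>{t}. y) \<in> measurable borel ?T"
    by (intro measurable_restrict measurable_ident_sets) simp
  have law_W: "distr M ?T W = distr ?U ?T (\<lambda>y. \<lambda>i\<in>{t}. y)"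
    unfolding xi_unif[of t, symmetric] W_def
    by (subst distr_distr[OF embed xi_rv]) (simp add: o_def restrict_def cong: if_cong)
  define E where "E = {z \<in> space (?S \<Otimes>\<^sub>M ?T). (\<Phi> (fst z), snd z t) \<in> C}"
  have "(\<lambda>z. (\<Phi> (fst z), snd z t)) \<in> measurable (?S \<Otimes>\<^sub>M ?T) (borel \<Otimes>\<^sub>M borel)"
    using \<Phi> by measurable
  moreover have "C \<in> sets (borel \<Otimes>\<^sub>M borel)"
    using C by (simp only: borel_prod)
  ultimately have E: "E \<in> sets (?S \<Otimes>\<^sub>M ?T)"
    unfolding E_def by (auto dest: measurable_sets simp: vimage_def Int_def conj_commute)
  have sections: "ennreal p \<le> emeasure (distr M ?T W) (Pair v -` E)" if "v \<in> D" for v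
  proof -
    have "(\<lambda>y. \<lambda>i\<in>{t}. y) -` (Pair v -` E) = {y. (\<Phi> v, y) \<in> C}"
      using sets.sets_into_space[OF D] that unfolding E_def by (auto simp: space_pair_measure space_PiM)
    moreover have "Pair v -` E \<in> sets ?T"
      using E by (rule sets_Pair1)
    ultimately show ?thesis
      unfolding law_W using embed Cp[of "\<Phi> v"] by (simp add: emeasure_distr)
  qed
  have W: "W \<in> measurable M ?T"
    unfolding W_def by (intro measurable_restrict xi_rv)
  have "{\<omega>\<in>space M. V \<omega> \<in> D \<and> (V \<omega>, W \<omega>) \<in> E}
      = A \<inter> {\<omega>\<in>space M. (interest_seq g m0 \<xi> t \<omega>, \<xi> t \<omega>) \<in> C}"
    using measurable_space[OF V] measurable_space[OF W] interest_seq_restrict[of t "{..<t}" g m0 \<xi>]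
    unfolding A_eq E_def \<Phi>_def V_def W_def by (auto simp: space_pair_measure)
  with emeasure_indep_var_section_ge[OF indep E D sections] show ?thesis
    unfolding A_eq by simp
qed

lemma interest_seq_good_run_prob:
  fixes g :: "real \<Rightarrow> real \<Rightarrow> real" and C :: "(real \<times> real) set"
  assumes g: "(\<lambda>p. g (fst p) (snd p)) \<in> borel_measurable borel"
    and C: "C \<in> sets borel"
    and Cp: "\<And>m. ennreal p \<le> emeasure (uniform_measure lborel {0..1}) {y. (m, y) \<in> C}"
    and "0 \<le> p"
    and A: "A \<in> sets (natural_filtration M \<xi> a)"
  shows "p ^ n * prob A
    \<le> prob (A \<inter> {\<omega>\<in>space M. \<forall>r\<in>{a..<a+n}. (interest_seq g m0 \<xi> r \<omega>, \<xi> r \<omega>) \<in> C})"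
  using A
proof (induction n arbitrary: a A)
  case 0
  then have "A \<subseteq> space M"
    using sets.sets_into_space by fastforce
  then show ?case
    by (simp add: Int_absorb2)
next
  case (Suc n)
  define good where "good = {\<omega>\<in>space M. (interest_seq g m0 \<xi> a \<omega>, \<xi> a \<omega>) \<in> C}"
  have "A \<in> sets (natural_filtration M \<xi> (Suc a))"
    using Suc.prems sets_natural_filtration_mono[of a "Suc a" M \<xi>] by auto
  moreover have "good \<in> sets (natural_filtration M \<xi> (Suc a))"
    unfolding good_def by (rule interest_seq_step_event_natural_filtration[OF g C]) simp
  ultimately have "A \<inter> good \<in> sets (natural_filtration M \<xi> (Suc a))"
    by (rule sets.Int)
  then have "p ^ n * prob (A \<inter> good)
      \<le> prob (A \<inter> good \<inter> {\<omega>\<in>space M. \<forall>r\<in>{Suc a..<Suc a+n}. (interest_seq g m0 \<xi> r \<omega>, \<xi> r \<omega>) \<in> C})"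
    by (rule Suc.IH)
  also have "{a..<a + Suc n} = insert a {Suc a..<Suc a + n}"
    by auto
  then have "A \<inter> good \<inter> {\<omega>\<in>space M. \<forall>r\<in>{Suc a..<Suc a+n}. (interest_seq g m0 \<xi> r \<omega>, \<xi> r \<omega>) \<in> C}
      = A \<inter> {\<omega>\<in>space M. \<forall>r\<in>{a..<a + Suc n}. (interest_seq g m0 \<xi> r \<omega>, \<xi> r \<omega>) \<in> C}"
    unfolding good_def by auto
  finally have IH: "p ^ n * prob (A \<inter> good)
      \<le> prob (A \<inter> {\<omega>\<in>space M. \<forall>r\<in>{a..<a + Suc n}. (interest_seq g m0 \<xi> r \<omega>, \<xi> r \<omega>) \<in> C})" .
  have "ennreal (p * prob A) \<le> ennreal (prob (A \<inter> good))"
    using interest_seq_step_prob[OF g C Cp Suc.prems] \<open>0 \<le> p\<close>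
    unfolding good_def by (simp add: emeasure_eq_measure ennreal_mult)
  then have "p * prob A \<le> prob (A \<inter> good)"
    by (simp add: ennreal_le_iff)
  from mult_left_mono[OF this zero_le_power[OF \<open>0 \<le> p\<close>, of n]]
  have "p ^ Suc n * prob A \<le> p ^ n * prob (A \<inter> good)"
    by (simp add: ac_simps)
  with IH show ?case
    by linarith
qed

lemma interest_seq_bounded_decay:
  fixes g :: "real \<Rightarrow> real \<Rightarrow> real" and C :: "(real \<times> real) set"
  assumes g: "(\<lambda>p. g (fst p) (snd p)) \<in> borel_measurable borel"
    and C: "C \<in> sets borel"
    and Cp: "\<And>m. ennreal p \<le> emeasure (uniform_measure lborel {0..1}) {y. (m, y) \<in> C}"
    and "0 \<le> p"
    and no_run: "\<And>\<omega>. \<forall>r\<le>a+N. \<bar>interest_seq g m0 \<xi> r \<omega>\<bar> \<le> K \<Longrightarrow>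
       \<exists>r\<in>{a..<a+N}. (interest_seq g m0 \<xi> r \<omega>, \<xi> r \<omega>) \<notin> C"
  defines "stay n \<equiv> {\<omega>\<in>space M. \<forall>r\<le>n. \<bar>interest_seq g m0 \<xi> r \<omega>\<bar> \<le> K}"
  shows "prob (stay (a + N)) \<le> (1 - p ^ N) * prob (stay a)"
proof -
  define good where "good = {\<omega>\<in>space M. \<forall>r\<in>{a..<a+N}. (interest_seq g m0 \<xi> r \<omega>, \<xi> r \<omega>) \<in> C}"
  have stay: "stay n \<in> sets (natural_filtration M \<xi> n)" for n
    unfolding stay_def by (rule interest_seq_bounded_natural_filtration[OF g])
  then have stay_M: "stay n \<in> sets M" for n
    using sets_natural_filtration_subset[where \<xi> = \<xi>, OF xi_rv] by blast
  have "{\<omega>\<in>space M. (interest_seq g m0 \<xi> r \<omega>, \<xi> r \<omega>) \<in> C} \<in> sets M" for r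
    using interest_seq_step_event_natural_filtration[OF g C, of r "Suc r"]
      sets_natural_filtration_subset[where \<xi> = \<xi>, OF xi_rv] by blast
  then have good_M: "good \<in> sets M"
    unfolding good_def by (intro sets.sets_Collect_finite_All) auto
  have "stay (a + N) \<subseteq> stay a - stay a \<inter> good"
    using no_run unfolding stay_def good_def by fastforce
  then have "prob (stay (a + N)) \<le> prob (stay a - stay a \<inter> good)"
    using stay_M good_M by (intro finite_measure_mono) auto
  also have "\<dots> = prob (stay a) - prob (stay a \<inter> good)"
    using stay_M good_M by (intro finite_measure_Diff) auto
  also have "\<dots> \<le> prob (stay a) - p ^ N * prob (stay a)"
    using interest_seq_good_run_prob[OF g C Cp \<open>0 \<le> p\<close> stay] unfolding good_def by simp
  finally show ?thesis
    by (simp add: algebra_simps)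
qed

lemma interest_seq_exits_ae:
  fixes g :: "real \<Rightarrow> real \<Rightarrow> real" and C :: "(real \<times> real) set"
  assumes g: "(\<lambda>p. g (fst p) (snd p)) \<in> borel_measurable borel"
    and C: "C \<in> sets borel"
    and Cp: "\<And>m. ennreal p \<le> emeasure (uniform_measure lborel {0..1}) {y. (m, y) \<in> C}"
    and "0 < p" "p \<le> 1"
    and no_run: "\<And>\<omega> a. \<forall>r\<le>a+N. \<bar>interest_seq g m0 \<xi> r \<omega>\<bar> \<le> K \<Longrightarrow>
       \<exists>r\<in>{a..<a+N}. (interest_seq g m0 \<xi> r \<omega>, \<xi> r \<omega>) \<notin> C"
  shows "AE \<omega> in M. \<exists>r. K < \<bar>interest_seq g m0 \<xi> r \<omega>\<bar>"
proof -
  define stay where "stay n = {\<omega>\<in>space M. \<forall>r\<le>n. \<bar>interest_seq g m0 \<xi> r \<omega>\<bar> \<le> K}" for n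
  define bad where "bad = {\<omega>\<in>space M. \<forall>r. \<bar>interest_seq g m0 \<xi> r \<omega>\<bar> \<le> K}"
  have "0 < p ^ N" "p ^ N \<le> 1"
    using \<open>0 < p\<close> \<open>p \<le> 1\<close> by (auto intro: power_le_one)
  have geometric: "prob (stay (j * N)) \<le> (1 - p ^ N) ^ j" for j
  proof (induction j)
    case (Suc j)
    have "prob (stay (Suc j * N)) \<le> (1 - p ^ N) * prob (stay (j * N))"
      using interest_seq_bounded_decay[OF g C Cp _ no_run, of "j * N"] \<open>0 < p\<close>
      unfolding stay_def by (simp add: add.commute)
    also have "\<dots> \<le> (1 - p ^ N) * (1 - p ^ N) ^ j"
      using Suc \<open>p ^ N \<le> 1\<close> by (intro mult_left_mono) auto
    finally show ?case
      by simp
  qed simp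
  have "bad \<in> sets M"
  proof -
    have "{\<omega>\<in>space M. \<bar>interest_seq g m0 \<xi> r \<omega>\<bar> \<le> K} \<in> sets M" for r
      using borel_measurable_abs[OF interest_seq_measurable[where \<xi> = \<xi>, OF g xi_rv]]
        borel_measurable_const
      by (rule borel_measurable_le)
    then show ?thesis
      unfolding bad_def by (rule sets.sets_Collect_countable_All)
  qed
  have "prob bad \<le> (1 - p ^ N) ^ j" for j
  proof -
    have "bad \<subseteq> stay (j * N)"
      unfolding bad_def stay_def by auto
    moreover have "stay (j * N) \<in> sets M"
      using interest_seq_bounded_natural_filtration[OF g] sets_natural_filtration_subset[where \<xi> = \<xi>, OF xi_rv]
      unfolding stay_def by blast
    ultimately have "prob bad \<le> prob (stay (j * N))"
      by (rule finite_measure_mono)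
    with geometric[of j] show ?thesis
      by simp
  qed
  then have "prob bad \<le> 0"
    using LIMSEQ_le_const[OF LIMSEQ_power_zero[of "1 - p ^ N"]] \<open>0 < p ^ N\<close> \<open>p ^ N \<le> 1\<close> by auto
  then have "prob bad = 0"
    using measure_nonneg[of M bad] by linarith
  with \<open>bad \<in> sets M\<close> have "bad \<in> null_sets M"
    by (simp add: null_sets_def emeasure_eq_measure)
  then show ?thesis
    by (rule AE_I') (auto simp: bad_def not_less)
qed

lemma interest_seq_exits_interval:
  fixes g :: "real \<Rightarrow> real \<Rightarrow> real"
  assumes g: "(\<lambda>p. g (fst p) (snd p)) \<in> borel_measurable borel"
    and "0 < \<delta>" "0 < e" "e \<le> 1" "\<bar>mc\<bar> \<le> K"
    and up: "\<And>m. m \<in> {mc..K} \<Longrightarrow> ennreal e \<le> emeasure (uniform_measure lborel {0..1}) {y. \<delta> < g m y}"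
    and down: "\<And>m. m \<in> {-K..mc} \<Longrightarrow> ennreal e \<le> emeasure (uniform_measure lborel {0..1}) {y. g m y \<le> -\<delta>}"
  shows "AE \<omega> in M. \<exists>r. K < \<bar>interest_seq g m0 \<xi> r \<omega>\<bar>"
proof -
  define C where "C = {z. K < \<bar>fst z\<bar> \<or> (mc \<le> fst z \<and> \<delta> < g (fst z) (snd z))
    \<or> (fst z < mc \<and> g (fst z) (snd z) \<le> -\<delta>)}"
  have [measurable]: "(\<lambda>p. g (fst p) (snd p)) \<in> borel_measurable (borel \<Otimes>\<^sub>M borel)"
    using g by (simp only: borel_prod)
  have "C = {z \<in> space (borel \<Otimes>\<^sub>M borel). K < \<bar>fst z\<bar> \<or> (mc \<le> fst z \<and> \<delta> < g (fst z) (snd z))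
      \<or> (fst z < mc \<and> g (fst z) (snd z) \<le> -\<delta>)}"
    unfolding C_def by (simp add: space_pair_measure)
  also have "\<dots> \<in> sets (borel \<Otimes>\<^sub>M borel)"
    by measurable
  finally have C: "C \<in> sets borel"
    by (simp only: borel_prod)
  have Cp: "ennreal e \<le> emeasure (uniform_measure lborel {0..1}) {y. (m, y) \<in> C}" for m
  proof -
    consider "K < \<bar>m\<bar>" | "\<bar>m\<bar> \<le> K" "mc \<le> m" | "\<bar>m\<bar> \<le> K" "m < mc"
      by linarith
    then show ?thesis
    proof cases
      case 1
      then have "{y. (m, y) \<in> C} = space (uniform_measure lborel {0..1})"
        unfolding C_def by auto
      then show ?thesis
        using prob_space.emeasure_space_1[OF prob_space_uniform_measure] \<open>e \<le> 1\<close> by simp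
    qed (use up down in \<open>auto simp: C_def\<close>)
  qed
  obtain N :: nat where N: "2 * K / \<delta> < N"
    using reals_Archimedean2 by blast
  show ?thesis
  proof (rule interest_seq_exits_ae[OF g C Cp \<open>0 < e\<close> \<open>e \<le> 1\<close>])
    fix \<omega> a assume bounded: "\<forall>r\<le>a+N. \<bar>interest_seq g m0 \<xi> r \<omega>\<bar> \<le> K"
    show "\<exists>r\<in>{a..<a+N}. (interest_seq g m0 \<xi> r \<omega>, \<xi> r \<omega>) \<notin> C"
    proof (rule ccontr)
      assume "\<not> ?thesis"
      then show False
        using bounded N \<open>0 < \<delta>\<close> \<open>\<bar>mc\<bar> \<le> K\<close>
        by (intro no_bounded_drifting_run[of "\<lambda>r. interest_seq g m0 \<xi> r \<omega>" g "\<lambda>r. \<xi> r \<omega>" a N K mc \<delta>])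
          (auto simp: C_def pos_divide_less_eq)
    qed
  qed
qed

end

theorem theorem1:
  fixes M :: "'a measure" and f :: "real \<Rightarrow> real \<Rightarrow> real"
    and m0 :: real and \<xi> :: "nat \<Rightarrow> 'a \<Rightarrow> real"
  assumes "prob_space M"
    and f_meas: "(\<lambda>p. f (fst p) (snd p)) \<in> borel_measurable
                   (restrict_space (borel :: (real \<times> real) measure) (UNIV \<times> {0..1}))"
    and xi_rv: "\<And>t. \<xi> t \<in> borel_measurable M"
    and xi_indep: "prob_space.indep_vars M (\<lambda>_. borel) \<xi> UNIV"
    and xi_unif: "\<And>t. distr M borel (\<xi> t) = uniform_measure lborel {0..1}"
    and F_cont: "\<And>m. isCont (\<lambda>p. incr_cdf f (fst p) (snd p)) (m, 0)"
    and cond: "\<exists>mc. (\<forall>m\<ge>mc. incr_cdf f m 0 < 1) \<and> (\<forall>m\<le>mc. incr_cdf f m 0 > 0)"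
  shows "AE \<omega> in M. limsup (\<lambda>t. ereal \<bar>interest_seq f m0 \<xi> t \<omega>\<bar>) = \<infinity>"
proof -
  interpret uniform_iid_sequence M \<xi>
    using assms by (simp add: uniform_iid_sequence_def uniform_iid_sequence_axioms_def)
  obtain mc where up: "\<And>m. mc \<le> m \<Longrightarrow> incr_cdf f m 0 < 1" and down: "\<And>m. m \<le> mc \<Longrightarrow> 0 < incr_cdf f m 0"
    using cond by blast
  \<comment> \<open>\<open>f\<close> is only measurable on \<open>\<real> \<times> {0..1}\<close>, where almost surely all \<open>\<xi> t\<close> lie.\<close>
  define g where "g = (\<lambda>m y. f m (max 0 (min 1 y)))"
  have g: "(\<lambda>p. g (fst p) (snd p)) \<in> borel_measurable borel"
    unfolding g_def using f_meas by (rule borel_measurable_clamp_snd)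
  have "AE \<omega> in M. \<exists>r. real k < \<bar>interest_seq g m0 \<xi> r \<omega>\<bar>" for k :: nat
  proof -
    obtain \<delta> e where "0 < \<delta>" "0 < e" "e \<le> 1" and "\<forall>m\<in>{mc..\<bar>mc\<bar> + k}. e \<le> 1 - incr_cdf f m \<delta>"
      and "\<forall>m\<in>{-(\<bar>mc\<bar> + k)..mc}. e \<le> incr_cdf f m (-\<delta>)"
      using uniform_drift_margin[OF F_cont up down, where K = "\<bar>mc\<bar> + k"] by blast
    then have "AE \<omega> in M. \<exists>r. \<bar>mc\<bar> + k < \<bar>interest_seq g m0 \<xi> r \<omega>\<bar>"
      using uniform_measure_clamped_cdf[OF g[unfolded g_def]]
      by (intro interest_seq_exits_interval[OF g]) (auto simp: g_def intro: ennreal_leI)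
    then show ?thesis
      by eventually_elim (metis abs_ge_zero le_add_same_cancel2 order.strict_trans1)
  qed
  then have "AE \<omega> in M. \<forall>k::nat. \<exists>r. real k < \<bar>interest_seq g m0 \<xi> r \<omega>\<bar>"
    by (simp add: AE_all_countable)
  with AE_interest_seq_clamp[of f m0] show ?thesis
    by eventually_elim (auto simp: g_def intro: limsup_abs_eq_infinity)
qed

end
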